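(* For unit activation costs, in every game under the coordination mechanism described in the context, for every optimal assignment $s^*$ there exists a payment vector $\xi$ such that $(s^*,\xi)$ is a Nash equilibrium.
   Context: Unit activation costs means $c(0)=0$ and $c(l)=1$ for every integer $l>0$. A game consists of the cost function $c$, slots $t=1,\dots,T$, and a set of jobs, each job $j$ having integer release time $r_j$ and deadline $d_j$ with $0<r_j<d_j<T$. An assignment $s$ gives each job a slot $s_j$ with $r_j\le s_j<d_j$; the load is $l_t(s)=|\{j:s_j=t\}|$ and $C(s)=\sum_{t=1}^T c(l_t(s))$; an optimal assignment minimizes $C$. In the coordination mechanism, each job $j$ chooses a pair $(s_j,\xi_j)$ with $s_j\in[r_j,d_j)$ and payment $\xi_j\ge0$. Slot $t$ is opened iff $\sum_{j:s_j=t}\xi_j\ge c(l_t(s))$; a job whose slot is not opened has infinite cost, otherwise its cost is $\xi_j$. A profile $(s,\xi)$ is a Nash equilibrium if for every job $j$: (i) $\sum_{j':s_{j'}=s_j}\xi_{j'}\ge c(l_{s_j}(s))$; (ii) for every $t\in[r_j,d_j)\setminus\{s_j\}$, $\xi_j\le\max\{0,\,c(l_t(s)+1)-\sum_{j':s_{j'}=t}\xi_{j'}\}$; (iii) $\xi_j\le\max\{0,\,c(l_{s_j}(s))-\sum_{j':s_{j'}=s_j,\,j'\ne j}\xi_{j'}\}$. *)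

theory Defs
  imports Complex_Main
begin

definition unit_cost :: "nat \<Rightarrow> real" where
  "unit_cost l = (if l = 0 then 0 else 1)"

definition valid_game :: "nat \<Rightarrow> 'j set \<Rightarrow> ('j \<Rightarrow> nat) \<Rightarrow> ('j \<Rightarrow> nat) \<Rightarrow> bool" where
  "valid_game T J r d \<longleftrightarrow> finite J \<and> (\<forall>j\<in>J. 0 < r j \<and> r j < d j \<and> d j < T)"

definition feasible :: "'j set \<Rightarrow> ('j \<Rightarrow> nat) \<Rightarrow> ('j \<Rightarrow> nat) \<Rightarrow> ('j \<Rightarrow> nat) \<Rightarrow> bool" where
  "feasible J r d s \<longleftrightarrow> (\<forall>j\<in>J. r j \<le> s j \<and> s j < d j)"

definition load :: "'j set \<Rightarrow> ('j \<Rightarrow> nat) \<Rightarrow> nat \<Rightarrow> nat" where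
  "load J s t = card {j\<in>J. s j = t}"

definition total_cost :: "(nat \<Rightarrow> real) \<Rightarrow> nat \<Rightarrow> 'j set \<Rightarrow> ('j \<Rightarrow> nat) \<Rightarrow> real" where
  "total_cost c T J s = (\<Sum>t\<in>{1..T}. c (load J s t))"

definition optimal_assignment ::
  "(nat \<Rightarrow> real) \<Rightarrow> nat \<Rightarrow> 'j set \<Rightarrow> ('j \<Rightarrow> nat) \<Rightarrow> ('j \<Rightarrow> nat) \<Rightarrow> ('j \<Rightarrow> nat) \<Rightarrow> bool" where
  "optimal_assignment c T J r d s \<longleftrightarrow> feasible J r d s \<and>
     (\<forall>s'. feasible J r d s' \<longrightarrow> total_cost c T J s \<le> total_cost c T J s')"

definition paid :: "'j set \<Rightarrow> ('j \<Rightarrow> nat) \<Rightarrow> ('j \<Rightarrow> real) \<Rightarrow> nat \<Rightarrow> real" where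
  "paid J s \<xi> t = (\<Sum>j'\<in>{j'\<in>J. s j' = t}. \<xi> j')"

text \<open>Nash equilibrium of the coordination mechanism, profile (s, xi):
  strategies are pairs (s j, xi j) with s j in [r j, d j) and xi j \<ge> 0,
  and conditions (i)-(iii) of the paper hold for every job.\<close>
definition nash_equilibrium ::
  "(nat \<Rightarrow> real) \<Rightarrow> 'j set \<Rightarrow> ('j \<Rightarrow> nat) \<Rightarrow> ('j \<Rightarrow> nat) \<Rightarrow> ('j \<Rightarrow> nat) \<Rightarrow> ('j \<Rightarrow> real) \<Rightarrow> bool" where
  "nash_equilibrium c J r d s \<xi> \<longleftrightarrow>
     feasible J r d s \<and> (\<forall>j\<in>J. \<xi> j \<ge> 0) \<and>
     (\<forall>j\<in>J.
        paid J s \<xi> (s j) \<ge> c (load J s (s j)) \<and>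
        (\<forall>t. r j \<le> t \<and> t < d j \<and> t \<noteq> s j \<longrightarrow>
              \<xi> j \<le> max 0 (c (load J s t + 1) - paid J s \<xi> t)) \<and>
        \<xi> j \<le> max 0 (c (load J s (s j)) - (\<Sum>j'\<in>{j'\<in>J. s j' = s j \<and> j' \<noteq> j}. \<xi> j')))"

end

theory Submission
  imports Defs
begin

text \<open>With unit costs the cost of an assignment is the number of occupied slots. In an optimal
  assignment every occupied slot u contains a job whose window meets no other occupied slot:
  otherwise each job of u could move to an occupied slot of its window, emptying u. Letting
  that job pay 1 for its slot and every other job pay 0 is an equilibrium, since the payer has
  nowhere to go but to an empty slot, which costs 1 as well, and nobody else pays anything.\<close>

definition pinned :: "'j set \<Rightarrow> ('j \<Rightarrow> nat) \<Rightarrow> ('j \<Rightarrow> nat) \<Rightarrow> ('j \<Rightarrow> nat) \<Rightarrow> 'j \<Rightarrow> bool" where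
  "pinned J r d s j \<longleftrightarrow> (\<forall>t. r j \<le> t \<and> t < d j \<and> t \<noteq> s j \<longrightarrow> t \<notin> s ` J)"

lemma load_eq_0_iff: "finite J \<Longrightarrow> load J s t = 0 \<longleftrightarrow> t \<notin> s ` J"
  unfolding load_def by auto

lemma total_cost_unit_cost:
  "finite J \<Longrightarrow> total_cost unit_cost T J s = card ({1..T} \<inter> s ` J)"
proof -
  assume "finite J"
  then have "unit_cost (load J s t) = of_bool (t \<in> s ` J)" for t
    by (simp add: unit_cost_def load_eq_0_iff)
  then show ?thesis
    by (simp add: total_cost_def Int_def)
qed

lemma optimal_assignment_has_pinned_job:
  assumes game: "valid_game T J r d"
    and opt: "optimal_assignment unit_cost T J r d s"
    and "j0 \<in> J"
  shows "\<exists>j\<in>J. s j = s j0 \<and> pinned J r d s j"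
proof (rule ccontr)
  assume no_pinned: "\<not> ?thesis"
  define u where "u = s j0"
  have fin: "finite J" and feas: "feasible J r d s"
    using game opt by (auto simp: valid_game_def optimal_assignment_def)
  have "\<forall>j\<in>J. \<exists>t. s j = u \<longrightarrow> r j \<le> t \<and> t < d j \<and> t \<noteq> u \<and> t \<in> s ` J"
    using no_pinned by (auto simp: pinned_def u_def)
  then obtain move where move:
    "\<And>j. j \<in> J \<Longrightarrow> s j = u \<Longrightarrow> r j \<le> move j \<and> move j < d j \<and> move j \<noteq> u \<and> move j \<in> s ` J"
    by metis
  define s' where "s' j = (if s j = u then move j else s j)" for j
  have "feasible J r d s'"
    using feas move by (auto simp: feasible_def s'_def)
  then have not_cheaper: "card ({1..T} \<inter> s ` J) \<le> card ({1..T} \<inter> s' ` J)"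
    using opt fin by (auto simp: optimal_assignment_def total_cost_unit_cost)
  have "s' ` J \<subseteq> s ` J - {u}"
    using move by (auto simp: s'_def)
  moreover have "u \<in> {1..T} \<inter> s ` J"
    using game feas \<open>j0 \<in> J\<close> by (force simp: valid_game_def feasible_def u_def)
  ultimately have "{1..T} \<inter> s' ` J \<subset> {1..T} \<inter> s ` J"
    by blast
  then have "card ({1..T} \<inter> s' ` J) < card ({1..T} \<inter> s ` J)"
    by (simp add: psubset_card_mono)
  with not_cheaper show False
    by simp
qed

lemma nash_equilibrium_pinned_payers:
  assumes fin: "finite J" and feas: "feasible J r d s"
    and payer: "\<And>j. j \<in> J \<Longrightarrow> p (s j) \<in> J \<and> s (p (s j)) = s j \<and> pinned J r d s (p (s j))"
  shows "nash_equilibrium unit_cost J r d s (\<lambda>j. if j = p (s j) then 1 else 0)"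
    (is "nash_equilibrium _ _ _ _ _ ?\<xi>")
proof -
  have paid_occupied: "paid J s ?\<xi> (s j) = 1" if "j \<in> J" for j
  proof -
    have "{j'\<in>J. s j' = s j \<and> j' = p (s j')} = {p (s j)}"
      using payer[OF that] by auto
    then show ?thesis
      using payer[OF that] by (simp add: paid_def sum.If_cases fin)
  qed
  have paid_empty: "paid J s ?\<xi> t = 0" if "t \<notin> s ` J" for t
    using that by (auto simp: paid_def intro: sum.neutral)
  have payer_alone: "(\<Sum>j'\<in>{j'\<in>J. s j' = s j \<and> j' \<noteq> j}. ?\<xi> j') = 0" if "j = p (s j)" for j
    using that by (auto intro: sum.neutral)
  show ?thesis
    unfolding nash_equilibrium_def
  proof (intro conjI ballI allI impI feas)
    fix j assume "j \<in> J"
    then show "unit_cost (load J s (s j)) \<le> paid J s ?\<xi> (s j)"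
      using paid_occupied by (simp add: unit_cost_def)
    show "?\<xi> j \<le> max 0 (unit_cost (load J s (s j)) - (\<Sum>j'\<in>{j'\<in>J. s j' = s j \<and> j' \<noteq> j}. ?\<xi> j'))"
      using payer_alone \<open>j \<in> J\<close> fin by (simp add: unit_cost_def load_eq_0_iff)
    fix t assume "r j \<le> t \<and> t < d j \<and> t \<noteq> s j"
    then have "j = p (s j) \<Longrightarrow> t \<notin> s ` J"
      using payer[OF \<open>j \<in> J\<close>] by (auto simp: pinned_def)
    then show "?\<xi> j \<le> max 0 (unit_cost (load J s t + 1) - paid J s ?\<xi> t)"
      using paid_empty by (simp add: unit_cost_def)
  qed simp
qed

theorem theorem4:
  fixes T :: nat and J :: "'j set" and r d s :: "'j \<Rightarrow> nat"
  assumes "valid_game T J r d"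
    and "optimal_assignment unit_cost T J r d s"
  shows "\<exists>\<xi> :: 'j \<Rightarrow> real. nash_equilibrium unit_cost J r d s \<xi>"
proof -
  have "\<forall>u\<in>s ` J. \<exists>j. j \<in> J \<and> s j = u \<and> pinned J r d s j"
    using optimal_assignment_has_pinned_job[OF assms] by blast
  then obtain p where "\<And>j. j \<in> J \<Longrightarrow> p (s j) \<in> J \<and> s (p (s j)) = s j \<and> pinned J r d s (p (s j))"
    by (metis image_eqI)
  moreover have "finite J" and "feasible J r d s"
    using assms by (auto simp: valid_game_def optimal_assignment_def)
  ultimately show ?thesis
    using nash_equilibrium_pinned_payers by blast
qed

end
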